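(* Let $\mu>1$, $\gamma=\mu\gamma_1^N$, $\rho\in(0,1)$, $0<\alpha<1/4$, $\rho_k=4k^\alpha$. There exist constants $A_5<\infty$ and $\delta_0>0$ such that for all $N\ge3$, all $0<\delta<\delta_0$ and all $z\in\widehat C_\delta$, $$\Big|\widetilde G_N(z)-\Big(-\tfrac12z_0^2+\tfrac14z_0^4+\tfrac12\sum_{k=1}^{N-1}\lambda_{k,N}|z_k|^2+\tfrac32 z_0^2\sum_{k=1}^{N-1}|z_k|^2\Big)\Big|\le A_5\delta^3,$$ where $\widehat C_\delta=\{z\in\widehat{\mathbb{R}}^N: z_0\in(-1+\rho,1-\rho),\ |z_k|\le\delta r_{k,N}/\sqrt{\lambda_{k,N}}\ \text{for }1\le k\le N-1\}$.
   Context: Indices modulo $N$; $F_{\gamma,N}(x)=\sum_{i=0}^{N-1}(\tfrac14x_i^4-\tfrac12x_i^2)+\tfrac\gamma4\sum_{i=0}^{N-1}(x_i-x_{i+1})^2$; $\gamma_1^N=\frac1{2\sin^2(\pi/N)}$; $G_N=N^{-1}F_{\gamma,N}$; $\lambda_{k,N}=-1+2\gamma\sin^2(k\pi/N)$ (positive for $1\le k\le N-1$ when $\gamma>\gamma_1^N$). $\omega=e^{2\pi i/N}$; $\widehat{\mathbb{R}}^N=\{z\in\mathbb{C}^N:z_k=\overline{z_{N-k}}\}$; $x_j(Nz)=\sum_k\omega^{jk}z_k$; $\widetilde G_N(z)=G_N(x(Nz))$. $r_{k,N}=r_{N-k,N}=\rho_k$ for $1\le k\le\lfloor N/2\rfloor$.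 *)

theory Defs
  imports "HOL-Analysis.Analysis"
begin

text \<open>Vectors in R^N / C^N are represented as functions on nat; only indices 0..N-1 matter,
  and indices are taken modulo N.\<close>

definition F_gN :: "real \<Rightarrow> nat \<Rightarrow> (nat \<Rightarrow> real) \<Rightarrow> real" where
  "F_gN \<gamma> N x = (\<Sum>i<N. x i ^ 4 / 4 - x i ^ 2 / 2)
      + \<gamma> / 4 * (\<Sum>i<N. (x i - x ((i + 1) mod N)) ^ 2)"

definition G_N :: "real \<Rightarrow> nat \<Rightarrow> (nat \<Rightarrow> real) \<Rightarrow> real" where
  "G_N \<gamma> N x = F_gN \<gamma> N x / real N"

definition gamma1 :: "nat \<Rightarrow> real" where
  "gamma1 N = 1 / (2 * (sin (pi / real N)) ^ 2)"

definition lam :: "real \<Rightarrow> nat \<Rightarrow> nat \<Rightarrow> real" where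
  "lam \<gamma> N k = -1 + 2 * \<gamma> * (sin (real k * pi / real N)) ^ 2"

definition omegaN :: "nat \<Rightarrow> complex" where
  "omegaN N = cis (2 * pi / real N)"

text \<open>x_j(Nz) = sum_k omega^(jk) z_k; this is real for z in hat R^N, we take the real part.\<close>
definition x_of :: "nat \<Rightarrow> (nat \<Rightarrow> complex) \<Rightarrow> nat \<Rightarrow> real" where
  "x_of N z j = Re (\<Sum>k<N. omegaN N ^ (j * k) * z k)"

definition Gt_N :: "real \<Rightarrow> nat \<Rightarrow> (nat \<Rightarrow> complex) \<Rightarrow> real" where
  "Gt_N \<gamma> N z = G_N \<gamma> N (x_of N z)"

definition hatR :: "nat \<Rightarrow> (nat \<Rightarrow> complex) set" where
  "hatR N = {z. \<forall>k<N. z k = cnj (z ((N - k) mod N))}"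

text \<open>r_{k,N} = r_{N-k,N} = rho_k = 4 k^alpha for 1 <= k <= floor(N/2).\<close>
definition r_kN :: "real \<Rightarrow> nat \<Rightarrow> nat \<Rightarrow> real" where
  "r_kN \<alpha> N k = 4 * real (min k (N - k)) powr \<alpha>"

definition Chat :: "real \<Rightarrow> real \<Rightarrow> real \<Rightarrow> nat \<Rightarrow> real \<Rightarrow> (nat \<Rightarrow> complex) set" where
  "Chat \<gamma> \<rho> \<alpha> N \<delta> = {z \<in> hatR N. Re (z 0) \<in> {-1 + \<rho> <..< 1 - \<rho>} \<and>
      (\<forall>k \<in> {1..N-1}. cmod (z k) \<le> \<delta> * r_kN \<alpha> N k / sqrt (lam \<gamma> N k))}"

end

(*
  Write z_0 = c and split the configuration x = x(Nz) as x_j = c + y_j, where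
  y is the Fourier synthesis of the non-constant modes.  Expanding the quartic
  double well around c and using Parseval for the quadratic and nearest-neighbour
  terms gives the exact identity
      G_N - (quadratic approximation) = (c * sum_j y_j^3 + sum_j y_j^4 / 4) / N,
  so everything reduces to the estimate  sum_j y_j^4 <= K delta^4 N  on C_delta.
  Since |z_k| <= C delta k^(alpha-1) (from lambda_k >= (mu-1)(2k/pi)^2), this
  follows by decomposing y into dyadic frequency shells: on the shell
  2^m <= k < 2^(m+1) the sup bound and Parseval give an L^4 bound decaying like
  2^((4 alpha - 1) m), and a weighted Hoelder inequality sums the shells since
  alpha < 1/4.  The cubic term is controlled by |y|^3 <= y^4/delta + delta^3.
*)
theory Submission
  imports Defs
begin

section \<open>Roots of unity\<close>

lemma omega_pow: "omegaN N ^ n = cis (2 * pi * real n / real N)"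
proof -
  have "omegaN N ^ n = cis (real n * (2 * pi / real N))"
    unfolding omegaN_def using Complex.DeMoivre by blast
  then show ?thesis by (simp add: field_simps)
qed

lemma cmod_omega_pow [simp]: "cmod (omegaN N ^ n) = 1"
  by (simp add: omega_pow)

lemma omega_pow_eq_1_iff:
  assumes N: "N > 0" shows "omegaN N ^ e = 1 \<longleftrightarrow> N dvd e"
proof
  assume "omegaN N ^ e = 1"
  then have "cos (2 * pi * real e / real N) = 1"
    by (simp add: omega_pow cis.ctr complex_eq_iff)
  then obtain n :: int where "2 * pi * real e / real N = 2 * pi * real_of_int n"
    by (metis cos_one_2pi_int mult.assoc mult.commute)
  then have "int e = int N * n" using N
    by (simp add: field_simps) (metis of_int_eq_iff of_int_mult of_int_of_nat_eq)
  then show "N dvd e" by (metis dvd_triv_left int_dvd_int_iff)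
next
  assume "N dvd e"
  then obtain m where e: "e = N * m" by blast
  have *: "2 * pi * real e / real N = 2 * pi * real m" using N by (simp add: e)
  have "cis (2 * pi * real m) = 1" using cis_multiple_2pi[of "real m"] Ints_of_nat by blast
  then show "omegaN N ^ e = 1" by (simp only: omega_pow *)
qed

lemma omega_pow_mod: "N > 0 \<Longrightarrow> omegaN N ^ n = omegaN N ^ (n mod N)"
proof -
  assume N: "N > 0"
  have "omegaN N ^ (N * (n div N)) = 1" using omega_pow_eq_1_iff[OF N] by simp
  then have "omegaN N ^ (N * (n div N) + n mod N) = omegaN N ^ (n mod N)"
    by (simp only: power_add) simp
  then show ?thesis by simp
qed

lemma sum_omega_pow:
  assumes N: "N > 0"
  shows "(\<Sum>j<N. omegaN N ^ (j * e)) = (if N dvd e then of_nat N else 0)"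
proof -
  have eq: "(\<Sum>j<N. omegaN N ^ (j * e)) = (\<Sum>j<N. (omegaN N ^ e) ^ j)"
    by (simp add: power_mult[symmetric] mult.commute)
  show ?thesis
  proof (cases "N dvd e")
    case True
    then have "omegaN N ^ e = 1" using omega_pow_eq_1_iff[OF N] by simp
    then show ?thesis using eq True by simp
  next
    case False
    then have ne: "omegaN N ^ e \<noteq> 1" using omega_pow_eq_1_iff[OF N] by simp
    have "(omegaN N ^ e) ^ N = 1"
      using omega_pow_eq_1_iff[OF N] by (simp add: power_mult[symmetric] mult.commute)
    then show ?thesis using eq ne False by (simp add: geometric_sum)
  qed
qed

lemma reflect_reflect: "(k::nat) < N \<Longrightarrow> (N - (N - k) mod N) mod N = k"
  by (cases "k = 0") auto

lemma cnj_omega_pow: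
  assumes N: "N > 0" and k: "k < N"
  shows "cnj (omegaN N ^ (j * k)) = omegaN N ^ (j * ((N - k) mod N))"
proof -
  let ?w = "omegaN N ^ (j * k)" and ?v = "omegaN N ^ (j * ((N - k) mod N))"
  have "N dvd j * k + j * ((N - k) mod N)"
  proof (cases "k = 0")
    case False
    then have "j * k + j * ((N - k) mod N) = j * N" using k by (simp add: algebra_simps)
    then show ?thesis by simp
  qed simp
  then have "?w * ?v = 1" by (simp add: power_add[symmetric] omega_pow_eq_1_iff[OF N])
  moreover have "?w * cnj ?w = 1"
    by (metis cmod_omega_pow complex_norm_square of_real_1 power_one)
  ultimately have "cnj ?w = (?w * ?v) * cnj ?w" by simp
  also have "\<dots> = ?v * (?w * cnj ?w)" by (simp only: mult_ac)
  also have "\<dots> = ?v" using \<open>?w * cnj ?w = 1\<close> by simp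
  finally show ?thesis .
qed

lemma orthogonality:
  assumes N: "N > 0" and k: "k < N" and l: "l < N"
  shows "(\<Sum>j<N. omegaN N ^ (j * k) * cnj (omegaN N ^ (j * l))) = (if k = l then of_nat N else 0)"
proof -
  have dvd_iff: "N dvd k + (N - l) mod N \<longleftrightarrow> k = l"
  proof (cases "l = 0")
    case True then show ?thesis using k by (auto dest: dvd_imp_le)
  next
    case False
    then have e: "k + (N - l) mod N = k + (N - l)" using l by simp
    show ?thesis
    proof
      assume "N dvd k + (N - l) mod N"
      then obtain q where q: "k + (N - l) = N * q" using e by (auto elim: dvdE)
      have "q \<noteq> 0" using q l False by (cases q) auto
      moreover have "q < 2"
      proof (rule ccontr)
        assume "\<not> q < 2"
        then have "N * 2 \<le> N * q" by simp
        then show False using q k l by linarith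
      qed
      ultimately show "k = l" using q l by (cases q) auto
    qed (use e l in simp)
  qed
  have "(\<Sum>j<N. omegaN N ^ (j * k) * cnj (omegaN N ^ (j * l)))
      = (\<Sum>j<N. omegaN N ^ (j * (k + (N - l) mod N)))"
    using cnj_omega_pow[OF N l] by (simp add: power_add[symmetric] algebra_simps)
  then show ?thesis using sum_omega_pow[OF N] dvd_iff by simp
qed

section \<open>Discrete Fourier synthesis\<close>

text \<open>The configuration with Fourier coefficients \<open>c\<close>: \<open>x_of N c = Re \<circ> fourier N c\<close>.\<close>
definition fourier :: "nat \<Rightarrow> (nat \<Rightarrow> complex) \<Rightarrow> nat \<Rightarrow> complex" where
  "fourier N c j = (\<Sum>k<N. omegaN N ^ (j * k) * c k)"

lemma fourier_norm_le: "cmod (fourier N c j) \<le> (\<Sum>k<N. cmod (c k))"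
proof -
  have "cmod (fourier N c j) \<le> (\<Sum>k<N. cmod (omegaN N ^ (j * k) * c k))"
    unfolding fourier_def by (rule norm_sum)
  also have "\<dots> = (\<Sum>k<N. cmod (c k))" by (simp add: norm_mult)
  finally show ?thesis .
qed

lemma parseval_complex:
  assumes N: "N > 0"
  shows "(\<Sum>j<N. fourier N c j * cnj (fourier N c j)) = of_nat N * (\<Sum>k<N. c k * cnj (c k))"
proof -
  let ?e = "\<lambda>j k l. c k * cnj (c l) * (omegaN N ^ (j * k) * cnj (omegaN N ^ (j * l)))"
  have "(\<Sum>j<N. fourier N c j * cnj (fourier N c j)) = (\<Sum>j<N. \<Sum>k<N. \<Sum>l<N. ?e j k l)"
    unfolding fourier_def cnj_sum sum_product
    by (rule sum.cong[OF refl])+ (simp only: complex_cnj_mult mult_ac)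
  also have "\<dots> = (\<Sum>k<N. \<Sum>j<N. \<Sum>l<N. ?e j k l)"
    by (rule sum.swap)
  also have "\<dots> = (\<Sum>k<N. \<Sum>l<N. \<Sum>j<N. ?e j k l)"
    by (rule sum.cong[OF refl]) (rule sum.swap)
  also have "\<dots> = (\<Sum>k<N. \<Sum>l<N. c k * cnj (c l)
                      * (\<Sum>j<N. omegaN N ^ (j * k) * cnj (omegaN N ^ (j * l))))"
    by (simp only: sum_distrib_left)
  also have "\<dots> = (\<Sum>k<N. \<Sum>l<N. c k * cnj (c l) * (if k = l then of_nat N else 0))"
    by (intro sum.cong refl) (simp only: orthogonality[OF N] lessThan_iff)
  also have "\<dots> = (\<Sum>k<N. \<Sum>l<N. if l = k then of_nat N * (c k * cnj (c k)) else 0)"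
    by (intro sum.cong refl) auto
  also have "\<dots> = of_nat N * (\<Sum>k<N. c k * cnj (c k))"
    by (simp add: sum_distrib_left)
  finally show ?thesis .
qed

lemma parseval:
  assumes N: "N > 0"
  shows "(\<Sum>j<N. (cmod (fourier N c j))\<^sup>2) = real N * (\<Sum>k<N. (cmod (c k))\<^sup>2)"
proof -
  have "complex_of_real (\<Sum>j<N. (cmod (fourier N c j))\<^sup>2)
      = complex_of_real (real N * (\<Sum>k<N. (cmod (c k))\<^sup>2))"
    using parseval_complex[OF N, of c]
    by (simp only: of_real_sum of_real_mult complex_norm_square of_real_of_nat_eq)
  then show ?thesis by (simp only: of_real_eq_iff)
qed

lemma fourier_real:
  assumes N: "N > 0" and c: "c \<in> hatR N"
  shows "Im (fourier N c j) = 0"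
proof -
  have reflect: "cnj (c k) = c ((N - k) mod N)" if "k < N" for k
  proof -
    have "(N - k) mod N < N" using N by simp
    then have "c ((N - k) mod N) = cnj (c ((N - (N - k) mod N) mod N))"
      using c unfolding hatR_def by blast
    then show ?thesis using reflect_reflect[OF that] by simp
  qed
  have "cnj (fourier N c j) = (\<Sum>k<N. omegaN N ^ (j * ((N - k) mod N)) * c ((N - k) mod N))"
    unfolding fourier_def cnj_sum
    by (rule sum.cong[OF refl]) (simp add: cnj_omega_pow[OF N] reflect del: complex_cnj_power)
  also have "\<dots> = fourier N c j"
    unfolding fourier_def
    by (rule sum.reindex_bij_witness[where i="\<lambda>k. (N - k) mod N" and j="\<lambda>k. (N - k) mod N"])
       (simp_all add: N reflect_reflect)
  finally have "Im (cnj (fourier N c j)) = Im (fourier N c j)" by simp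
  then show ?thesis by simp
qed

lemma parseval_real:
  assumes N: "N > 0" and c: "c \<in> hatR N"
  shows "(\<Sum>j<N. (Re (fourier N c j))\<^sup>2) = real N * (\<Sum>k<N. (cmod (c k))\<^sup>2)"
  using parseval[OF N, of c] fourier_real[OF N c] by (simp add: cmod_def)

lemma sum_fourier:
  assumes N: "N > 0" shows "(\<Sum>j<N. fourier N c j) = of_nat N * c 0"
proof -
  have "(\<Sum>j<N. fourier N c j) = (\<Sum>k<N. c k * (\<Sum>j<N. omegaN N ^ (j * k)))"
    unfolding fourier_def by (subst sum.swap) (simp add: sum_distrib_left mult_ac)
  also have "\<dots> = (\<Sum>k<N. if k = 0 then of_nat N * c 0 else 0)"
  proof (rule sum.cong[OF refl])
    fix k assume "k \<in> {..<N}"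
    then have "N dvd k \<longleftrightarrow> k = 0" by (auto dest: dvd_imp_le)
    then show "c k * (\<Sum>j<N. omegaN N ^ (j * k)) = (if k = 0 then of_nat N * c 0 else 0)"
      using sum_omega_pow[OF N, of k] by auto
  qed
  finally show ?thesis using N by simp
qed

section \<open>A weighted Hoelder inequality\<close>

lemma cauchy_schwarz_weighted:
  fixes a c :: "'i \<Rightarrow> real"
  assumes c: "\<And>i. i \<in> I \<Longrightarrow> c i > 0"
  shows "(\<Sum>i\<in>I. a i)\<^sup>2 \<le> (\<Sum>i\<in>I. c i) * (\<Sum>i\<in>I. (a i)\<^sup>2 / c i)"
proof -
  have "(\<Sum>i\<in>I. a i) = (\<Sum>i\<in>I. sqrt (c i) * (a i / sqrt (c i)))"
  proof (rule sum.cong[OF refl])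
    fix i assume "i \<in> I"
    then show "a i = sqrt (c i) * (a i / sqrt (c i))" using c[of i] by simp
  qed
  then have "(\<Sum>i\<in>I. a i)\<^sup>2 \<le> (\<Sum>i\<in>I. (sqrt (c i))\<^sup>2) * (\<Sum>i\<in>I. (a i / sqrt (c i))\<^sup>2)"
    using Cauchy_Schwarz_ineq_sum[of "\<lambda>i. sqrt (c i)" "\<lambda>i. a i / sqrt (c i)" I] by simp
  also have "\<dots> = (\<Sum>i\<in>I. c i) * (\<Sum>i\<in>I. (a i)\<^sup>2 / c i)"
    using c by (intro arg_cong2[where f="(*)"] sum.cong refl) (auto simp: power_divide less_imp_le)
  finally show ?thesis .
qed

text \<open>Hoelder's inequality with exponents \<open>4\<close> and \<open>4/3\<close>, obtained by applying
  the weighted Cauchy--Schwarz inequality twice.\<close>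
lemma hoelder4_weighted:
  fixes a c :: "'i \<Rightarrow> real"
  assumes c: "\<And>i. i \<in> I \<Longrightarrow> c i > 0"
  shows "(\<Sum>i\<in>I. a i) ^ 4 \<le> (\<Sum>i\<in>I. c i) ^ 3 * (\<Sum>i\<in>I. (a i) ^ 4 / (c i) ^ 3)"
proof -
  have "(\<Sum>i\<in>I. a i) ^ 4 = ((\<Sum>i\<in>I. a i)\<^sup>2)\<^sup>2" by simp
  also have "\<dots> \<le> ((\<Sum>i\<in>I. c i) * (\<Sum>i\<in>I. (a i)\<^sup>2 / c i))\<^sup>2"
    by (rule power_mono[OF cauchy_schwarz_weighted[OF c] zero_le_power2])
  also have "\<dots> = (\<Sum>i\<in>I. c i)\<^sup>2 * (\<Sum>i\<in>I. (a i)\<^sup>2 / c i)\<^sup>2"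
    by (simp add: power_mult_distrib)
  also have "\<dots> \<le> (\<Sum>i\<in>I. c i)\<^sup>2 * ((\<Sum>i\<in>I. c i) * (\<Sum>i\<in>I. ((a i)\<^sup>2 / c i)\<^sup>2 / c i))"
    by (rule mult_left_mono[OF cauchy_schwarz_weighted[OF c] zero_le_power2])
  also have "\<dots> = (\<Sum>i\<in>I. c i) ^ 3 * (\<Sum>i\<in>I. (a i) ^ 4 / (c i) ^ 3)"
    by (simp add: power_divide eval_nat_numeral field_simps)
  finally show ?thesis .
qed

lemma geometric_l4_sum:
  fixes Y :: "nat \<Rightarrow> 'j \<Rightarrow> real"
  assumes s: "0 < s" "s < 1" and C: "C \<ge> 0"
    and decay: "\<And>m. (\<Sum>j\<in>J. (Y m j) ^ 4) \<le> C * s ^ (4 * m)"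
  shows "(\<Sum>j\<in>J. (\<Sum>m<M. Y m j) ^ 4) \<le> C / (1 - s) ^ 4"
proof -
  define G where "G = (\<Sum>m<M. s ^ m)"
  have G0: "G \<ge> 0" unfolding G_def using s by (intro sum_nonneg) simp
  have "G = (1 - s ^ M) / (1 - s)" using s by (simp add: G_def sum_gp_strict)
  then have G1: "G \<le> 1 / (1 - s)" using s by (simp add: divide_right_mono)
  have piece: "(\<Sum>j\<in>J. (Y m j) ^ 4) / (s ^ m) ^ 3 \<le> C * s ^ m" for m
  proof -
    have "s ^ (4 * m) = (s ^ m) ^ 3 * s ^ m"
      by (simp flip: power_mult power_add)
    then show ?thesis using decay[of m] s by (simp add: divide_le_eq mult_ac)
  qed
  have "(\<Sum>j\<in>J. (\<Sum>m<M. Y m j) ^ 4) \<le> (\<Sum>j\<in>J. G ^ 3 * (\<Sum>m<M. (Y m j) ^ 4 / (s ^ m) ^ 3))"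
    unfolding G_def using s by (intro sum_mono hoelder4_weighted) simp
  also have "\<dots> = G ^ 3 * (\<Sum>m<M. (\<Sum>j\<in>J. (Y m j) ^ 4) / (s ^ m) ^ 3)"
    by (simp add: sum_distrib_left sum_divide_distrib sum.swap[of _ J])
  also have "\<dots> \<le> G ^ 3 * (\<Sum>m<M. C * s ^ m)"
    using G0 by (intro mult_left_mono sum_mono piece) simp
  also have "\<dots> = G ^ 3 * (C * G)" by (simp add: G_def sum_distrib_left)
  also have "\<dots> = C * G ^ 4" by (simp add: power_Suc2[of G 3, simplified])
  also have "\<dots> \<le> C * (1 / (1 - s)) ^ 4"
    using G0 G1 C by (intro mult_left_mono power_mono) auto
  finally show ?thesis by (simp add: power_divide)
qed

section \<open>Dyadic frequency shells\<close>

text \<open>Frequency \<open>k\<close> and \<open>N - k\<close> represent the same wave number \<open>min k (N - k)\<close>.\<close>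
definition wavenum :: "nat \<Rightarrow> nat \<Rightarrow> nat" where
  "wavenum N k = min k (N - k)"

definition shell :: "nat \<Rightarrow> nat \<Rightarrow> nat set" where
  "shell N m = {k. 1 \<le> k \<and> k < N \<and> 2 ^ m \<le> wavenum N k \<and> wavenum N k < 2 ^ (m + 1)}"

definition shell_part :: "nat \<Rightarrow> nat \<Rightarrow> (nat \<Rightarrow> complex) \<Rightarrow> nat \<Rightarrow> complex" where
  "shell_part N m w k = (if k \<in> shell N m then w k else 0)"

text \<open>A shell has at most \<open>2\<^sup>m\<^sup>+\<^sup>1\<close> frequencies (\<open>2\<^sup>m\<close> wave numbers, two signs).\<close>
lemma card_shell: "card (shell N m) \<le> 2 ^ (m + 1)"
proof -
  let ?A = "{2 ^ m..<2 ^ (m + 1) :: nat}"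
  have "shell N m \<subseteq> ?A \<union> (\<lambda>i. N - i) ` ?A"
  proof
    fix k assume k: "k \<in> shell N m"
    show "k \<in> ?A \<union> (\<lambda>i. N - i) ` ?A"
    proof (cases "k \<le> N - k")
      case True then show ?thesis using k by (auto simp: shell_def wavenum_def)
    next
      case False
      then have "wavenum N k = N - k" by (simp add: wavenum_def)
      moreover have "k = N - (N - k)" using k by (auto simp: shell_def)
      ultimately have "N - k \<in> ?A" using k unfolding shell_def by auto
      then have "N - (N - k) \<in> (\<lambda>i. N - i) ` ?A" by (rule imageI)
      then show ?thesis using \<open>k = N - (N - k)\<close> by simp
    qed
  qed
  then have "card (shell N m) \<le> card (?A \<union> (\<lambda>i. N - i) ` ?A)" by (intro card_mono) auto
  also have "\<dots> \<le> card ?A + card ((\<lambda>i. N - i) ` ?A)" by (rule card_Un_le)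
  also have "\<dots> \<le> card ?A + card ?A" using card_image_le[of ?A "\<lambda>i. N - i"] by simp
  finally show ?thesis by simp
qed

lemma sum_over_shell_le:
  fixes f :: "nat \<Rightarrow> real"
  assumes le: "\<And>k. k \<in> shell N m \<Longrightarrow> f k \<le> b" and zero: "\<And>k. k \<notin> shell N m \<Longrightarrow> f k = 0"
    and b: "b \<ge> 0"
  shows "(\<Sum>k<N. f k) \<le> 2 ^ (m + 1) * b"
proof -
  have "(\<Sum>k<N. f k) = (\<Sum>k\<in>shell N m. f k)"
    using zero by (intro sum.mono_neutral_right) (auto simp: shell_def)
  also have "\<dots> \<le> (\<Sum>k\<in>shell N m. b)" using le by (rule sum_mono)
  also have "\<dots> = real (card (shell N m)) * b" by simp
  also have "\<dots> \<le> 2 ^ (m + 1) * b"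
  proof (rule mult_right_mono[OF _ b])
    have "real (card (shell N m)) \<le> real (2 ^ (m + 1))" by (simp only: of_nat_le_iff card_shell)
    then show "real (card (shell N m)) \<le> 2 ^ (m + 1)" by simp
  qed
  finally show ?thesis .
qed

text \<open>Shells are reflection invariant, so shell parts of Hermitian vectors are Hermitian.\<close>
lemma shell_part_hatR: "w \<in> hatR N \<Longrightarrow> shell_part N m w \<in> hatR N"
  unfolding hatR_def
proof (intro CollectI allI impI)
  fix k assume w: "w \<in> {z. \<forall>k<N. z k = cnj (z ((N - k) mod N))}" and k: "k < N"
  show "shell_part N m w k = cnj (shell_part N m w ((N - k) mod N))"
  proof (cases "k = 0")
    case True then show ?thesis by (simp add: shell_part_def shell_def)
  next
    case False
    then have sk: "(N - k) mod N = N - k" using k by simp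
    have "wavenum N (N - k) = wavenum N k" using k by (simp add: wavenum_def)
    then have "N - k \<in> shell N m \<longleftrightarrow> k \<in> shell N m"
      using False k unfolding shell_def by auto
    moreover have "w k = cnj (w ((N - k) mod N))" using w k by blast
    ultimately show ?thesis using sk by (simp add: shell_part_def)
  qed
qed

lemma dyadic_index_unique:
  assumes "2 ^ a \<le> (x::nat)" "x < 2 ^ (a + 1)" "2 ^ b \<le> x" "x < 2 ^ (b + 1)"
  shows "a = b"
proof -
  have "(2::nat) ^ a < 2 ^ (b + 1)" "(2::nat) ^ b < 2 ^ (a + 1)" using assms by linarith+
  moreover have "1 < (2::nat)" by simp
  ultimately have "a < b + 1" "b < a + 1" using power_less_imp_less_exp by blast+
  then show ?thesis by linarith
qed

text \<open>Every nonzero frequency lies in exactly one shell, so a vector without zero mode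
  is the sum of its shell parts.\<close>
lemma sum_shell_parts:
  assumes w0: "w 0 = 0" and k: "k < N"
  shows "(\<Sum>m<N. shell_part N m w k) = w k"
proof (cases "k = 0")
  case True then show ?thesis using w0 by (simp add: shell_part_def shell_def)
next
  case False
  then have "wavenum N k \<ge> 1" using k by (simp add: wavenum_def)
  then obtain m0 where m0: "2 ^ m0 \<le> wavenum N k" "wavenum N k < 2 ^ (m0 + 1)"
    using ex_power_ivl1[of 2] by auto
  have "wavenum N k \<le> k" by (simp add: wavenum_def)
  then have "m0 < N" using less_exp[of m0] m0(1) k by linarith
  have "k \<in> shell N m \<longleftrightarrow> m = m0" for m
    using dyadic_index_unique[OF m0, of m] m0 False k by (auto simp: shell_def)
  then have "(\<Sum>m<N. shell_part N m w k) = (\<Sum>m<N. if m = m0 then w k else 0)"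
    by (intro sum.cong) (simp_all add: shell_part_def)
  then show ?thesis using \<open>m0 < N\<close> by simp
qed

lemma fourier_shell_decomposition:
  assumes "w 0 = 0"
  shows "fourier N w j = (\<Sum>m<N. fourier N (shell_part N m w) j)"
proof -
  have "fourier N w j = (\<Sum>k<N. omegaN N ^ (j * k) * (\<Sum>m<N. shell_part N m w k))"
    unfolding fourier_def by (rule sum.cong[OF refl]) (simp add: sum_shell_parts[of w, OF assms])
  also have "\<dots> = (\<Sum>m<N. fourier N (shell_part N m w) j)"
    unfolding fourier_def sum_distrib_left by (rule sum.swap)
  finally show ?thesis .
qed

text \<open>On a single shell with coefficients bounded by \<open>a\<close>, the synthesized configuration
  is bounded by \<open>2\<^sup>m\<^sup>+\<^sup>1 a\<close> and by Parseval its square sum by \<open>N 2\<^sup>m\<^sup>+\<^sup>1 a\<^sup>2\<close>;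
  together this bounds its fourth-power sum.\<close>
lemma shell_l4_bound:
  assumes N: "N > 0" and w: "w \<in> hatR N"
    and bd: "\<And>k. k \<in> shell N m \<Longrightarrow> cmod (w k) \<le> a" and a: "a \<ge> 0"
  shows "(\<Sum>j<N. (Re (fourier N (shell_part N m w) j)) ^ 4) \<le> 8 * real N * (8 ^ m * a ^ 4)"
proof -
  let ?y = "\<lambda>j. Re (fourier N (shell_part N m w) j)"
  have sup: "(?y j)\<^sup>2 \<le> (2 ^ (m + 1) * a)\<^sup>2" for j
  proof -
    have "\<bar>?y j\<bar> \<le> (\<Sum>k<N. cmod (shell_part N m w k))"
      using abs_Re_le_cmod fourier_norm_le order_trans by blast
    also have "\<dots> \<le> 2 ^ (m + 1) * a"
      using bd a by (intro sum_over_shell_le) (simp_all add: shell_part_def)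
    finally have "\<bar>?y j\<bar> \<le> 2 ^ (m + 1) * a" .
    then show ?thesis by (metis abs_ge_zero power2_abs power_mono)
  qed
  have "(\<Sum>j<N. (?y j)\<^sup>2) = real N * (\<Sum>k<N. (cmod (shell_part N m w k))\<^sup>2)"
    by (rule parseval_real[OF N shell_part_hatR[OF w]])
  also have "\<dots> \<le> real N * (2 ^ (m + 1) * a\<^sup>2)"
    using bd a by (intro mult_left_mono sum_over_shell_le) (simp_all add: shell_part_def power_mono)
  finally have l2: "(\<Sum>j<N. (?y j)\<^sup>2) \<le> real N * (2 ^ (m + 1) * a\<^sup>2)" .
  have "(\<Sum>j<N. (?y j) ^ 4) \<le> (\<Sum>j<N. (2 ^ (m + 1) * a)\<^sup>2 * (?y j)\<^sup>2)"
  proof (rule sum_mono)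
    fix j
    have "(?y j)\<^sup>2 * (?y j)\<^sup>2 \<le> (2 ^ (m + 1) * a)\<^sup>2 * (?y j)\<^sup>2"
      by (intro mult_right_mono sup) simp
    then show "(?y j) ^ 4 \<le> (2 ^ (m + 1) * a)\<^sup>2 * (?y j)\<^sup>2" by (simp add: eval_nat_numeral)
  qed
  also have "\<dots> \<le> (2 ^ (m + 1) * a)\<^sup>2 * (real N * (2 ^ (m + 1) * a\<^sup>2))"
    unfolding sum_distrib_left[symmetric] by (intro mult_left_mono l2) simp
  also have "\<dots> = 8 * real N * ((2 * 2 * 2) ^ m * a ^ 4)"
    unfolding power_mult_distrib by (simp add: power_add eval_nat_numeral del: mult_2)
  finally show ?thesis by simp
qed

text \<open>The exponent bookkeeping of the shell estimate: a coefficient decay \<open>k\<^sup>\<alpha>\<^sup>-\<^sup>1\<close>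
  makes the \<open>m\<close>-th shell contribute \<open>s\<^sup>4\<^sup>m\<close> with \<open>s = 2\<^sup>\<alpha>\<^sup>-\<^sup>1\<^sup>/\<^sup>4\<close>.\<close>
lemma shell_weight:
  "8 ^ m * (real (2 ^ m) powr (\<alpha> - 1)) ^ 4 = (2 powr (\<alpha> - 1/4)) ^ (4 * m)"
proof -
  define t where "t = (2::real) powr (\<alpha> - 1)"
  have "8 * t ^ 4 = 2 powr 3 * 2 powr (4 * \<alpha> - 4)"
    by (simp add: t_def powr_power algebra_simps)
  also have "\<dots> = 2 powr (3 + (4 * \<alpha> - 4))" by (rule powr_add[symmetric])
  also have "\<dots> = (2 powr (\<alpha> - 1/4)) ^ 4" by (simp add: powr_power algebra_simps)
  finally have t4: "8 * t ^ 4 = (2 powr (\<alpha> - 1/4)) ^ 4" .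
  have "real (2 ^ m) powr (\<alpha> - 1) = t ^ m"
    by (simp add: t_def powr_realpow[symmetric] powr_powr powr_power mult.commute)
  then have "8 ^ m * (real (2 ^ m) powr (\<alpha> - 1)) ^ 4 = (8 * t ^ 4) ^ m"
    by (simp add: power_mult_distrib flip: power_mult) (simp add: mult.commute)
  also have "\<dots> = (2 powr (\<alpha> - 1/4)) ^ (4 * m)" by (simp add: t4 power_mult)
  finally show ?thesis .
qed

lemma quartic_bound:
  assumes N: "N > 0" and w: "w \<in> hatR N" and w0: "w 0 = 0"
    and bd: "\<And>k. 1 \<le> k \<Longrightarrow> k < N \<Longrightarrow> cmod (w k) \<le> D * real (wavenum N k) powr (\<alpha> - 1)"
    and \<alpha>: "\<alpha> < 1/4" and D: "D \<ge> 0"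
  shows "(\<Sum>j<N. (Re (fourier N w j)) ^ 4) \<le> 8 * D ^ 4 / (1 - 2 powr (\<alpha> - 1/4)) ^ 4 * real N"
proof -
  define s where "s = (2::real) powr (\<alpha> - 1/4)"
  have s0: "0 < s" by (simp add: s_def)
  have s1: "s < 1" unfolding s_def using \<alpha> powr_less_mono[of "\<alpha> - 1/4" 0 2] by simp
  define a where "a m = D * real (2 ^ m) powr (\<alpha> - 1)" for m :: nat
  have on_shell: "cmod (w k) \<le> a m" if "k \<in> shell N m" for k m
  proof -
    have k: "1 \<le> k" "k < N" "2 ^ m \<le> wavenum N k" using that by (auto simp: shell_def)
    have "real (wavenum N k) powr (\<alpha> - 1) \<le> real (2 ^ m) powr (\<alpha> - 1)"
      using k \<alpha> by (intro powr_mono2') auto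
    then show ?thesis using bd[OF k(1,2)] D unfolding a_def by (meson mult_left_mono order_trans)
  qed
  have shells: "(\<Sum>j<N. (Re (fourier N (shell_part N m w) j)) ^ 4) \<le> 8 * real N * D ^ 4 * s ^ (4 * m)"
    for m
  proof -
    have "(\<Sum>j<N. (Re (fourier N (shell_part N m w) j)) ^ 4) \<le> 8 * real N * (8 ^ m * a m ^ 4)"
      using D by (intro shell_l4_bound[OF N w on_shell]) (simp_all add: a_def)
    also have "\<dots> = 8 * real N * D ^ 4 * s ^ (4 * m)"
      using shell_weight[of m \<alpha>] by (simp add: a_def s_def power_mult_distrib)
    finally show ?thesis .
  qed
  have "(\<Sum>j<N. (Re (fourier N w j)) ^ 4) = (\<Sum>j<N. (\<Sum>m<N. Re (fourier N (shell_part N m w) j)) ^ 4)"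
    by (simp add: fourier_shell_decomposition[of w, OF w0])
  also have "\<dots> \<le> 8 * real N * D ^ 4 / (1 - s) ^ 4"
    using s0 s1 D by (intro geometric_l4_sum shells) simp_all
  finally show ?thesis by (simp add: s_def mult_ac)
qed

section \<open>The spectrum of the quadratic form\<close>

text \<open>Jordan's inequality, from concavity of \<open>sin\<close> on \<open>[0, \<pi>]\<close>.\<close>
lemma sin_jordan:
  fixes u :: real assumes "0 \<le> u" "u \<le> pi / 2"
  shows "2 * u / pi \<le> sin u"
proof -
  have cc: "concave_on {0..pi} sin"
    by (rule f''_le0_imp_concave[where f'=cos and f''="\<lambda>x. - sin x"])
       (auto intro!: derivative_eq_intros sin_ge_zero)
  define t where "t = 2 * u / pi"
  have t: "0 \<le> t" "t \<le> 1" using assms pi_gt_zero by (auto simp: t_def field_simps)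
  have "(1 - t) * sin 0 + t * sin (pi / 2) \<le> sin ((1 - t) *\<^sub>R 0 + t *\<^sub>R (pi / 2))"
    by (rule concave_onD[OF cc t]) auto
  moreover have "t *\<^sub>R (pi / 2) = u" using pi_gt_zero by (simp add: t_def)
  ultimately show ?thesis by (simp add: t_def)
qed

lemma sin_multiple_ratio:
  fixes n x :: real
  assumes x: "0 < x" and n: "1 \<le> n" and nx: "n * x \<le> pi / 2"
  shows "1 \<le> sin (n * x) / sin x" "2 * n / pi \<le> sin (n * x) / sin x"
proof -
  have "x \<le> n * x" using n x by simp
  then have "x < pi" using nx pi_gt_zero by linarith
  then have sx: "0 < sin x" using x by (intro sin_gt_zero) auto
  have "sin x \<le> sin (n * x)"
    using sin_mono_le_eq[of x "n * x"] x \<open>x \<le> n * x\<close> nx by auto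
  then show "1 \<le> sin (n * x) / sin x" using sx by simp
  have "2 * n / pi * sin x \<le> 2 * n / pi * x"
    using sin_x_le_x[of x] x n by (intro mult_left_mono) auto
  also have "\<dots> = 2 * (n * x) / pi" by simp
  also have "\<dots> \<le> sin (n * x)" using x n nx by (intro sin_jordan) auto
  finally show "2 * n / pi \<le> sin (n * x) / sin x" using sx by (simp add: field_simps)
qed

text \<open>\<open>\<lambda>\<^sub>k\<close> only depends on the wave number.\<close>
lemma sin_wavenum:
  assumes "k < N"
  shows "sin (real k * pi / real N) = sin (real (wavenum N k) * pi / real N)"
proof (cases "k \<le> N - k")
  case False
  then have "real (wavenum N k) * pi / real N = pi - real k * pi / real N"
    using assms by (simp add: wavenum_def of_nat_diff field_simps)
  then show ?thesis by simp
qed (simp add: wavenum_def)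

lemma lam_lower:
  assumes N: "N \<ge> 3" and mu: "\<mu> > 1" and k: "1 \<le> k" "k < N"
  shows "(\<mu> - 1) * (2 * real (wavenum N k) / pi)\<^sup>2 \<le> lam (\<mu> * gamma1 N) N k"
proof -
  define x where "x = pi / real N"
  define n where "n = real (wavenum N k)"
  define r where "r = sin (n * x) / sin x"
  have x0: "0 < x" using N by (simp add: x_def)
  have n1: "1 \<le> n" using k by (simp add: n_def wavenum_def)
  have "2 * wavenum N k \<le> N" by (simp add: wavenum_def)
  then have "2 * n \<le> real N" unfolding n_def by linarith
  then have nx: "n * x \<le> pi / 2" using N by (simp add: x_def field_simps)
  have r1: "1 \<le> r" and r2: "2 * n / pi \<le> r"
    unfolding r_def using sin_multiple_ratio[OF x0 n1 nx] by auto
  have "sin x \<noteq> 0" using x0 nx n1 r1 r_def by force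
  then have "lam (\<mu> * gamma1 N) N k = \<mu> * r\<^sup>2 - 1"
    unfolding lam_def gamma1_def sin_wavenum[OF k(2)]
    by (simp add: r_def n_def x_def power_divide field_simps)
  moreover have "(\<mu> - 1) * (2 * n / pi)\<^sup>2 \<le> (\<mu> - 1) * r\<^sup>2"
    using r2 mu n1 by (intro mult_left_mono power_mono) auto
  moreover have "1 \<le> r\<^sup>2" using r1 by (simp add: one_le_power)
  ultimately show ?thesis by (simp add: n_def algebra_simps)
qed

lemma Chat_coefficient_decay:
  assumes N: "N \<ge> 3" and mu: "\<mu> > 1" and k: "1 \<le> k" "k < N" and d: "\<delta> > 0"
    and zk: "cmod zk \<le> \<delta> * r_kN \<alpha> N k / sqrt (lam (\<mu> * gamma1 N) N k)"
  shows "cmod zk \<le> \<delta> * (2 * pi / sqrt (\<mu> - 1)) * real (wavenum N k) powr (\<alpha> - 1)"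
proof -
  define n where "n = real (wavenum N k)"
  have n1: "n \<ge> 1" using k by (simp add: n_def wavenum_def)
  define l where "l = sqrt (\<mu> - 1) * (2 * n / pi)"
  have l0: "l > 0" using mu n1 by (simp add: l_def)
  have "sqrt ((\<mu> - 1) * (2 * n / pi)\<^sup>2) \<le> sqrt (lam (\<mu> * gamma1 N) N k)"
    using lam_lower[OF N mu k] by (simp add: n_def)
  then have "l \<le> sqrt (lam (\<mu> * gamma1 N) N k)"
    using n1 mu by (simp add: l_def real_sqrt_mult)
  moreover have "0 \<le> \<delta> * r_kN \<alpha> N k" using d by (simp add: r_kN_def)
  ultimately have "\<delta> * r_kN \<alpha> N k / sqrt (lam (\<mu> * gamma1 N) N k) \<le> \<delta> * r_kN \<alpha> N k / l"
  proof (rule divide_left_mono)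
    show "0 < sqrt (lam (\<mu> * gamma1 N) N k) * l" using l0 \<open>l \<le> _\<close> by (meson mult_pos_pos order_less_le_trans)
  qed
  also have "\<dots> = \<delta> * (2 * pi / sqrt (\<mu> - 1)) * (n powr \<alpha> / n)"
    using mu n1 by (simp add: l_def r_kN_def n_def wavenum_def field_simps)
  also have "n powr \<alpha> / n = n powr (\<alpha> - 1)" using n1 by (simp add: powr_diff)
  finally show ?thesis using zk by (simp add: n_def)
qed

section \<open>The exact expansion of the energy\<close>

text \<open>The non-constant Fourier modes of \<open>z\<close>; they synthesize the fluctuation around the mean.\<close>
definition nonconst_modes :: "(nat \<Rightarrow> complex) \<Rightarrow> nat \<Rightarrow> complex" where
  "nonconst_modes z k = (if k = 0 then 0 else z k)"

lemma nonconst_modes_hatR: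
  assumes z: "z \<in> hatR N" shows "nonconst_modes z \<in> hatR N"
  unfolding hatR_def
proof (intro CollectI allI impI)
  fix k assume k: "k < N"
  show "nonconst_modes z k = cnj (nonconst_modes z ((N - k) mod N))"
  proof (cases "k = 0")
    case False
    then have "(N - k) mod N \<noteq> 0" using k by simp
    moreover have "z k = cnj (z ((N - k) mod N))" using z k unfolding hatR_def by blast
    ultimately show ?thesis using False by (simp add: nonconst_modes_def)
  qed (simp add: nonconst_modes_def)
qed

lemma x_of_mean_fluctuation:
  assumes N: "N > 0"
  shows "x_of N z j = Re (z 0) + Re (fourier N (nonconst_modes z) j)"
proof -
  have "(\<Sum>k<N. omegaN N ^ (j * k) * z k)
      = (\<Sum>k<N. (if k = 0 then z 0 else 0) + omegaN N ^ (j * k) * nonconst_modes z k)"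
    by (rule sum.cong[OF refl]) (auto simp: nonconst_modes_def)
  also have "\<dots> = z 0 + fourier N (nonconst_modes z) j"
    using N by (simp add: sum.distrib fourier_def)
  finally show ?thesis by (simp add: x_of_def)
qed

text \<open>Nearest-neighbour differences of \<open>x\<close> are synthesized by the modes \<open>(1 - \<omega>\<^sup>k) z\<^sub>k\<close>.\<close>
definition difference_modes :: "nat \<Rightarrow> (nat \<Rightarrow> complex) \<Rightarrow> nat \<Rightarrow> complex" where
  "difference_modes N z k = (1 - omegaN N ^ k) * z k"

lemma x_of_difference:
  assumes N: "N > 0"
  shows "x_of N z j - x_of N z ((j + 1) mod N) = Re (fourier N (difference_modes N z) j)"
proof -
  have shift: "omegaN N ^ (((j + 1) mod N) * k) = omegaN N ^ (j * k) * omegaN N ^ k" for k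
  proof -
    have "omegaN N ^ (((j + 1) mod N) * k) = omegaN N ^ ((((j + 1) mod N) * k) mod N)"
      by (rule omega_pow_mod[OF N])
    also have "\<dots> = omegaN N ^ ((j + 1) * k)"
      by (simp add: mod_mult_left_eq omega_pow_mod[OF N, symmetric])
    finally show ?thesis by (simp add: algebra_simps power_add)
  qed
  have "(\<Sum>k<N. omegaN N ^ (j * k) * z k) - (\<Sum>k<N. omegaN N ^ (((j + 1) mod N) * k) * z k)
      = fourier N (difference_modes N z) j"
    unfolding fourier_def difference_modes_def shift sum_subtractf[symmetric]
    by (rule sum.cong[OF refl]) (simp add: algebra_simps)
  then show ?thesis unfolding x_of_def by (metis minus_complex.sel(1))
qed

lemma difference_modes_hatR:
  assumes N: "N > 0" and z: "z \<in> hatR N"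
  shows "difference_modes N z \<in> hatR N"
  unfolding hatR_def
proof (intro CollectI allI impI)
  fix k assume k: "k < N"
  have "cnj (omegaN N ^ (1 * ((N - k) mod N))) = omegaN N ^ (1 * ((N - (N - k) mod N) mod N))"
    using N by (intro cnj_omega_pow) simp_all
  then have "cnj (omegaN N ^ ((N - k) mod N)) = omegaN N ^ k" using reflect_reflect[OF k] by simp
  moreover have "z k = cnj (z ((N - k) mod N))" using z k unfolding hatR_def by blast
  ultimately show "difference_modes N z k = cnj (difference_modes N z ((N - k) mod N))"
    by (simp add: difference_modes_def)
qed

lemma cmod_1_minus_omega_pow:
  "(cmod (1 - omegaN N ^ k))\<^sup>2 = 4 * (sin (real k * pi / real N))\<^sup>2"
proof -
  define a where "a = real k * pi / real N"
  have th: "2 * pi * real k / real N = 2 * a" by (simp add: a_def)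
  have "(cmod (1 - omegaN N ^ k))\<^sup>2 = (1 - cos (2 * a))\<^sup>2 + (sin (2 * a))\<^sup>2"
    by (simp add: omega_pow th cmod_power2)
  also have "\<dots> = 2 - 2 * cos (2 * a)"
    using sin_cos_squared_add[of "2 * a"] by (simp add: power2_eq_square algebra_simps)
  also have "\<dots> = 4 * (sin a)\<^sup>2" by (simp add: cos_double_sin)
  finally show ?thesis by (simp add: a_def)
qed

lemma sum_lessThan_split_zero:
  "(N::nat) > 0 \<Longrightarrow> (\<Sum>k<N. f k) = f 0 + (\<Sum>k=1..N-1. (f k :: 'a::comm_monoid_add))"
proof -
  assume "N > 0"
  then have "{..<N} = insert 0 {1..N-1}" by auto
  then show ?thesis by simp
qed

lemma coupling_energy:
  assumes N: "N > 0" and z: "z \<in> hatR N"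
  shows "(\<Sum>j<N. (x_of N z j - x_of N z ((j + 1) mod N))\<^sup>2)
       = real N * (4 * (\<Sum>k=1..N-1. (sin (real k * pi / real N))\<^sup>2 * (cmod (z k))\<^sup>2))"
proof -
  have "(\<Sum>j<N. (x_of N z j - x_of N z ((j + 1) mod N))\<^sup>2)
      = real N * (\<Sum>k<N. (cmod (difference_modes N z k))\<^sup>2)"
    unfolding x_of_difference[OF N] by (rule parseval_real[OF N difference_modes_hatR[OF N z]])
  also have "(\<Sum>k<N. (cmod (difference_modes N z k))\<^sup>2)
      = (\<Sum>k<N. 4 * ((sin (real k * pi / real N))\<^sup>2 * (cmod (z k))\<^sup>2))"
    unfolding difference_modes_def
    by (rule sum.cong[OF refl]) (simp add: norm_mult power_mult_distrib cmod_1_minus_omega_pow)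
  also have "\<dots> = 4 * (\<Sum>k=1..N-1. (sin (real k * pi / real N))\<^sup>2 * (cmod (z k))\<^sup>2)"
    unfolding sum_lessThan_split_zero[OF N] by (simp add: sum_distrib_left)
  finally show ?thesis .
qed

lemma double_well_taylor:
  "((c::real) + y) ^ 4 / 4 - (c + y)\<^sup>2 / 2
   = (c ^ 4 / 4 - c\<^sup>2 / 2) + (c ^ 3 - c) * y + (3/2 * c\<^sup>2 - 1/2) * y\<^sup>2 + c * y ^ 3 + y ^ 4 / 4"
  by (simp add: field_simps eval_nat_numeral)

text \<open>The exact expansion: the energy minus its quadratic approximation is the averaged
  cubic and quartic part of the fluctuation \<open>y\<close> (the linear term vanishes because \<open>y\<close>
  has mean zero, the quadratic terms are diagonalised by Parseval).\<close>
lemma energy_expansion: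
  assumes N: "N > 0" and z: "z \<in> hatR N"
  defines "c \<equiv> Re (z 0)" and "y \<equiv> \<lambda>j. Re (fourier N (nonconst_modes z) j)"
  shows "Gt_N \<gamma> N z - (- 1/2 * c\<^sup>2 + 1/4 * c ^ 4
             + 1/2 * (\<Sum>k=1..N-1. lam \<gamma> N k * (cmod (z k))\<^sup>2)
             + 3/2 * c\<^sup>2 * (\<Sum>k=1..N-1. (cmod (z k))\<^sup>2))
       = (c * (\<Sum>j<N. (y j) ^ 3) + (\<Sum>j<N. (y j) ^ 4) / 4) / real N"
proof -
  define W where "W = (\<Sum>k=1..N-1. (cmod (z k))\<^sup>2)"
  define S where "S = (\<Sum>k=1..N-1. (sin (real k * pi / real N))\<^sup>2 * (cmod (z k))\<^sup>2)"
  have x: "x_of N z j = c + y j" for j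
    unfolding c_def y_def by (rule x_of_mean_fluctuation[OF N])
  have "(\<Sum>j<N. y j) = Re (\<Sum>j<N. fourier N (nonconst_modes z) j)" by (simp add: y_def)
  then have mean: "(\<Sum>j<N. y j) = 0"
    using sum_fourier[OF N, of "nonconst_modes z"] by (simp add: nonconst_modes_def)
  have l2: "(\<Sum>j<N. (y j)\<^sup>2) = real N * W"
    unfolding y_def parseval_real[OF N nonconst_modes_hatR[OF z]] sum_lessThan_split_zero[OF N] W_def
    by (simp add: nonconst_modes_def)
  have "(\<Sum>j<N. (x_of N z j) ^ 4 / 4 - (x_of N z j)\<^sup>2 / 2)
      = (\<Sum>j<N. (c ^ 4 / 4 - c\<^sup>2 / 2) + (c ^ 3 - c) * y j + (3/2 * c\<^sup>2 - 1/2) * (y j)\<^sup>2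
                + c * (y j) ^ 3 + (y j) ^ 4 / 4)"
    unfolding x double_well_taylor ..
  also have "\<dots> = real N * (c ^ 4 / 4 - c\<^sup>2 / 2) + (3/2 * c\<^sup>2 - 1/2) * (real N * W)
                  + c * (\<Sum>j<N. (y j) ^ 3) + (\<Sum>j<N. (y j) ^ 4) / 4"
    by (simp add: sum.distrib mean sum_distrib_left[symmetric] sum_divide_distrib l2[symmetric])
  finally have "Gt_N \<gamma> N z = (real N * (c ^ 4 / 4 - c\<^sup>2 / 2) + (3/2 * c\<^sup>2 - 1/2) * (real N * W)
                  + c * (\<Sum>j<N. (y j) ^ 3) + (\<Sum>j<N. (y j) ^ 4) / 4
                  + \<gamma> / 4 * (real N * (4 * S))) / real N"
    unfolding Gt_N_def G_N_def F_gN_def coupling_energy[OF N z, folded S_def] by simp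
  also have "\<dots> = c ^ 4 / 4 - c\<^sup>2 / 2 + (3/2 * c\<^sup>2 - 1/2) * W + \<gamma> * S
                  + (c * (\<Sum>j<N. (y j) ^ 3) + (\<Sum>j<N. (y j) ^ 4) / 4) / real N"
    using N by (simp add: field_simps)
  moreover have "(\<Sum>k=1..N-1. lam \<gamma> N k * (cmod (z k))\<^sup>2) = - W + 2 * \<gamma> * S"
    unfolding lam_def W_def S_def
    by (simp add: algebra_simps sum.distrib sum_distrib_left sum_subtractf)
  ultimately show ?thesis by (simp add: W_def algebra_simps)
qed

section \<open>Estimating the remainder\<close>

lemma abs_cube_le:
  fixes y d :: real assumes d: "d > 0" shows "\<bar>y\<bar> ^ 3 \<le> y ^ 4 / d + d ^ 3"
proof (cases "\<bar>y\<bar> \<le> d")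
  case True
  then have "\<bar>y\<bar> ^ 3 \<le> d ^ 3" by (intro power_mono) auto
  moreover have "y ^ 4 / d \<ge> 0" using d by simp
  ultimately show ?thesis by linarith
next
  case False
  then have "\<bar>y\<bar> ^ 3 * d \<le> \<bar>y\<bar> ^ 3 * \<bar>y\<bar>" by (intro mult_left_mono) auto
  also have "\<dots> = (\<bar>y\<bar>\<^sup>2)\<^sup>2" by (simp add: eval_nat_numeral)
  also have "\<dots> = y ^ 4" by (simp add: eval_nat_numeral)
  finally have "\<bar>y\<bar> ^ 3 \<le> y ^ 4 / d" using d by (simp add: field_simps)
  moreover have "d ^ 3 \<ge> 0" using d by simp
  ultimately show ?thesis by linarith
qed

lemma remainder_bound:
  fixes y :: "nat \<Rightarrow> real"
  assumes N: "N > 0" and c: "\<bar>c\<bar> \<le> 1" and d: "0 < \<delta>" "\<delta> \<le> 1" and K: "K \<ge> 0"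
    and quartic: "(\<Sum>j<N. (y j) ^ 4) \<le> K * \<delta> ^ 4 * real N"
  shows "\<bar>(c * (\<Sum>j<N. (y j) ^ 3) + (\<Sum>j<N. (y j) ^ 4) / 4) / real N\<bar> \<le> (2 * K + 1) * \<delta> ^ 3"
proof -
  define T4 where "T4 = (\<Sum>j<N. (y j) ^ 4)"
  have T4_0: "T4 \<ge> 0" unfolding T4_def by (intro sum_nonneg) simp
  have "K * \<delta> ^ 4 * real N = (K * \<delta> ^ 3 * real N) * \<delta>"
    by (simp add: power_Suc2[of \<delta> 3, simplified] mult_ac)
  then have "T4 \<le> (K * \<delta> ^ 3 * real N) * \<delta>" using quartic by (simp only: T4_def)
  then have T4_3: "T4 / \<delta> \<le> K * \<delta> ^ 3 * real N" using d(1) by (simp add: pos_divide_le_eq)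
  have "\<bar>c * (\<Sum>j<N. (y j) ^ 3)\<bar> \<le> \<bar>\<Sum>j<N. (y j) ^ 3\<bar>"
    using c by (simp add: abs_mult mult_left_le_one_le)
  also have "\<dots> \<le> (\<Sum>j<N. \<bar>y j\<bar> ^ 3)"
    using sum_abs[of "\<lambda>j. (y j) ^ 3" "{..<N}"] by (simp add: power_abs)
  also have "\<dots> \<le> (\<Sum>j<N. (y j) ^ 4 / \<delta> + \<delta> ^ 3)"
    by (intro sum_mono abs_cube_le d)
  also have "\<dots> = T4 / \<delta> + real N * \<delta> ^ 3"
    by (simp add: T4_def sum.distrib sum_divide_distrib)
  finally have cubic: "\<bar>c * (\<Sum>j<N. (y j) ^ 3)\<bar> \<le> K * \<delta> ^ 3 * real N + real N * \<delta> ^ 3"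
    using T4_3 by linarith
  have "\<delta> ^ 4 \<le> \<delta> ^ 3" using d by (simp add: power_decreasing)
  then have "K * \<delta> ^ 4 * real N \<le> K * \<delta> ^ 3 * real N" using K by (intro mult_right_mono mult_left_mono) simp_all
  then have quart: "T4 / 4 \<le> K * \<delta> ^ 3 * real N" using quartic T4_0 unfolding T4_def by linarith
  have "(2 * K + 1) * \<delta> ^ 3 * real N = 2 * (K * \<delta> ^ 3 * real N) + real N * \<delta> ^ 3"
    by (simp add: algebra_simps)
  then have "\<bar>c * (\<Sum>j<N. (y j) ^ 3) + T4 / 4\<bar> \<le> (2 * K + 1) * \<delta> ^ 3 * real N"
    using cubic quart T4_0 abs_triangle_ineq[of "c * (\<Sum>j<N. (y j) ^ 3)" "T4 / 4"] by linarith
  then show ?thesis using N by (simp add: T4_def pos_divide_le_eq)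
qed

lemma Chat_quartic_bound:
  assumes N: "N \<ge> 3" and mu: "\<mu> > 1" and \<alpha>: "\<alpha> < 1/4" and d: "\<delta> > 0"
    and z: "z \<in> Chat (\<mu> * gamma1 N) \<rho> \<alpha> N \<delta>"
  shows "(\<Sum>j<N. (Re (fourier N (nonconst_modes z) j)) ^ 4)
           \<le> 8 * (2 * pi / sqrt (\<mu> - 1)) ^ 4 / (1 - 2 powr (\<alpha> - 1/4)) ^ 4 * \<delta> ^ 4 * real N"
proof -
  have zR: "z \<in> hatR N" using z by (simp add: Chat_def)
  have "cmod (nonconst_modes z k) \<le> \<delta> * (2 * pi / sqrt (\<mu> - 1)) * real (wavenum N k) powr (\<alpha> - 1)"
    if "1 \<le> k" "k < N" for k
    using that z Chat_coefficient_decay[OF N mu that d] by (simp add: Chat_def nonconst_modes_def)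
  then have "(\<Sum>j<N. (Re (fourier N (nonconst_modes z) j)) ^ 4)
      \<le> 8 * (\<delta> * (2 * pi / sqrt (\<mu> - 1))) ^ 4 / (1 - 2 powr (\<alpha> - 1/4)) ^ 4 * real N"
    using N d mu \<alpha>
    by (intro quartic_bound nonconst_modes_hatR[OF zR]) (simp_all add: nonconst_modes_def)
  also have "\<dots> = 8 * (2 * pi / sqrt (\<mu> - 1)) ^ 4 / (1 - 2 powr (\<alpha> - 1/4)) ^ 4 * \<delta> ^ 4 * real N"
    unfolding power_mult_distrib by (simp only: mult_ac times_divide_eq_left times_divide_eq_right)
  finally show ?thesis .
qed

theorem lemma4p8:
  fixes \<mu> \<rho> \<alpha> :: real
  assumes "\<mu> > 1" and "0 < \<rho>" and "\<rho> < 1" and "0 < \<alpha>" and "\<alpha> < 1/4"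
  shows "\<exists>A5 \<delta>0::real. \<delta>0 > 0 \<and>
    (\<forall>N::nat. \<forall>\<delta>::real. \<forall>z. N \<ge> 3 \<longrightarrow> 0 < \<delta> \<longrightarrow> \<delta> < \<delta>0 \<longrightarrow>
       z \<in> Chat (\<mu> * gamma1 N) \<rho> \<alpha> N \<delta> \<longrightarrow>
       \<bar>Gt_N (\<mu> * gamma1 N) N z
          - (- 1/2 * Re (z 0) ^ 2 + 1/4 * Re (z 0) ^ 4
             + 1/2 * (\<Sum>k=1..N-1. lam (\<mu> * gamma1 N) N k * cmod (z k) ^ 2)
             + 3/2 * Re (z 0) ^ 2 * (\<Sum>k=1..N-1. cmod (z k) ^ 2))\<bar>
        \<le> A5 * \<delta> ^ 3)"
proof -
  define K where "K = 8 * (2 * pi / sqrt (\<mu> - 1)) ^ 4 / (1 - 2 powr (\<alpha> - 1/4)) ^ 4"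
  have K: "K \<ge> 0" using assms(1) by (simp add: K_def)
  have "\<bar>Gt_N (\<mu> * gamma1 N) N z
          - (- 1/2 * Re (z 0) ^ 2 + 1/4 * Re (z 0) ^ 4
             + 1/2 * (\<Sum>k=1..N-1. lam (\<mu> * gamma1 N) N k * cmod (z k) ^ 2)
             + 3/2 * Re (z 0) ^ 2 * (\<Sum>k=1..N-1. cmod (z k) ^ 2))\<bar> \<le> (2 * K + 1) * \<delta> ^ 3"
    if N: "N \<ge> 3" and d: "0 < \<delta>" "\<delta> < 1" and z: "z \<in> Chat (\<mu> * gamma1 N) \<rho> \<alpha> N \<delta>"
    for N \<delta> z
  proof -
    have N0: "N > 0" using N by simp
    have zR: "z \<in> hatR N" and c: "\<bar>Re (z 0)\<bar> \<le> 1" using z assms(2) by (auto simp: Chat_def)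
    show ?thesis
      unfolding energy_expansion[OF N0 zR]
      using Chat_quartic_bound[OF N assms(1,5) d(1) z, folded K_def] d
      by (intro remainder_bound[OF N0 c d(1) _ K]) simp_all
  qed
  then show ?thesis by (intro exI[of _ "2 * K + 1"] exI[of _ 1]) auto
qed

end
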